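(* Every multi-parameter random simplicial complex $X\sim X(n,\mathbf{p})$ is homogeneous and spatially independent. Conversely, for every homogeneous and spatially independent random subcomplex $X$ of $\triangle_n$ there exists a multi-parameter $\mathbf{p}=(p_0,\dots,p_{n-1})\in[0,1]^n$ such that $X\sim X(n,\mathbf{p})$.
   Context: $\triangle_n=2^{[n]}$ is the complete simplicial complex on $[n]$; a subcomplex is a family $Y\subset2^{[n]}$ closed under taking subsets, $S_n$ is the set of subcomplexes, and a random subcomplex is an $S_n$-valued random variable. $X$ is homogeneous if $X$ and $gX=\{g(\sigma):\sigma\in X\}$ have the same distribution for every permutation $g$ of $[n]$; spatially independent if $\mathbb{P}(Y_1\cup Y_2\subset X)\mathbb{P}(Y_1\cap Y_2\subset X)=\mathbb{P}(Y_1\subset X)\mathbb{P}(Y_2\subset X)$ for all $Y_1,Y_2\in S_n$. The multi-parameter random simplicial complex $X(n,\mathbf{p})$: retain each vertex of $[n]$ independently with probability $p_0$; each edge with both endpoints retained is added independently with probability $p_1$; iteratively for $i=2,\dots,n-1$, each $i$-simplex (subset of size $i+1$) of $[n]$ all of whose proper faces are already present is added independently with probability $p_i$. Equivalently $\mathbb{P}(X=Y)=\prod_{i=0}^{n-1}p_i^{f_i(Y)}(1-p_i)^{e_i(Y)}$, where $f_i(Y)$ is the number of $i$-simplices of $Y$ and $e_i(Y)$ the number of $i$-simplices $\sigma\notin Y$ all of whose proper subsets lie in $Y$. *)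

theory Defs
  imports "HOL-Probability.Probability" "HOL-Combinatorics.Permutations"
begin

text \<open>Vertex set [n] is rendered as {0..<n}. Simplices are nonempty subsets of [n];
  an i-simplex is a subset of size i+1.\<close>

definition subcomplexes :: "nat \<Rightarrow> nat set set set" where
  "subcomplexes n = {Y. (\<forall>\<sigma>\<in>Y. \<sigma> \<noteq> {} \<and> \<sigma> \<subseteq> {0..<n})
                        \<and> (\<forall>\<sigma>\<in>Y. \<forall>\<tau>. \<tau> \<subseteq> \<sigma> \<and> \<tau> \<noteq> {} \<longrightarrow> \<tau> \<in> Y)}"

definition random_subcomplex :: "nat \<Rightarrow> nat set set pmf \<Rightarrow> bool" where
  "random_subcomplex n X \<longleftrightarrow> set_pmf X \<subseteq> subcomplexes n"

definition homogeneous :: "nat \<Rightarrow> nat set set pmf \<Rightarrow> bool" where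
  "homogeneous n X \<longleftrightarrow>
     (\<forall>g. g permutes {0..<n} \<longrightarrow> map_pmf (\<lambda>Y. (\<lambda>\<sigma>. g ` \<sigma>) ` Y) X = X)"

definition spatially_independent :: "nat \<Rightarrow> nat set set pmf \<Rightarrow> bool" where
  "spatially_independent n X \<longleftrightarrow>
     (\<forall>Y1\<in>subcomplexes n. \<forall>Y2\<in>subcomplexes n.
        measure_pmf.prob X {Z. Y1 \<union> Y2 \<subseteq> Z} * measure_pmf.prob X {Z. Y1 \<inter> Y2 \<subseteq> Z}
        = measure_pmf.prob X {Z. Y1 \<subseteq> Z} * measure_pmf.prob X {Z. Y2 \<subseteq> Z})"

definition f_num :: "nat set set \<Rightarrow> nat \<Rightarrow> nat" where
  "f_num Y i = card {\<sigma>\<in>Y. card \<sigma> = i + 1}"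

definition e_num :: "nat \<Rightarrow> nat set set \<Rightarrow> nat \<Rightarrow> nat" where
  "e_num n Y i = card {\<sigma>. \<sigma> \<subseteq> {0..<n} \<and> card \<sigma> = i + 1 \<and> \<sigma> \<notin> Y
                        \<and> (\<forall>\<tau>. \<tau> \<subset> \<sigma> \<and> \<tau> \<noteq> {} \<longrightarrow> \<tau> \<in> Y)}"

definition mp_prob :: "nat \<Rightarrow> (nat \<Rightarrow> real) \<Rightarrow> nat set set \<Rightarrow> real" where
  "mp_prob n p Y = (\<Prod>i<n. p i ^ f_num Y i * (1 - p i) ^ e_num n Y i)"

definition is_multiparam :: "nat \<Rightarrow> (nat \<Rightarrow> real) \<Rightarrow> nat set set pmf \<Rightarrow> bool" where
  "is_multiparam n p X \<longleftrightarrow> random_subcomplex n X \<and>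
     (\<forall>Y\<in>subcomplexes n. pmf X Y = mp_prob n p Y)"

end

(*
  Write P(Y) for the probability that the subcomplex Y is contained in X. Since a subcomplex
  Z containing Y equals Y iff it contains no minimal non-face of Y, splitting on one face at
  a time shows that X ~ X(n,p) iff P(Y) is the product over the faces of Y of p_(dim sigma).
  This product is invariant under relabelling vertices, and it turns spatial independence
  into the identity prod(Y1 Un Y2) * prod(Y1 Int Y2) = prod Y1 * prod Y2.

  Conversely, if sigma is a maximal face of Y then Y is the union of Y - {sigma} and the
  full simplex on sigma, which intersect in the boundary of sigma. Spatial independence thus
  splits off from P(Y) the factor P(simplex sigma) / P(boundary sigma), giving P(Y) as a
  product over the faces of Y, and homogeneity makes each factor depend only on dim sigma.
*)

theory Submission
  imports Defs
begin

definition simplices :: "nat \<Rightarrow> nat set set" where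
  "simplices n = {\<sigma>. \<sigma> \<subseteq> {0..<n} \<and> \<sigma> \<noteq> {}}"

definition min_nonfaces :: "nat \<Rightarrow> nat set set \<Rightarrow> nat set set" where
  "min_nonfaces n Y = {\<sigma> \<in> simplices n. \<sigma> \<notin> Y \<and> (\<forall>\<tau>. \<tau> \<subset> \<sigma> \<and> \<tau> \<noteq> {} \<longrightarrow> \<tau> \<in> Y)}"

abbreviation incl_prob :: "'a set pmf \<Rightarrow> 'a set \<Rightarrow> real" where
  "incl_prob X Y \<equiv> measure_pmf.prob X {Z. Y \<subseteq> Z}"

abbreviation incl_avoid_prob :: "'a set pmf \<Rightarrow> 'a set \<Rightarrow> 'a set \<Rightarrow> real" where
  "incl_avoid_prob X Y F \<equiv> measure_pmf.prob X {Z. Y \<subseteq> Z \<and> Z \<inter> F = {}}"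

lemma finite_simplices: "finite (simplices n)"
  by (rule finite_subset[of _ "Pow {0..<n}"]) (auto simp: simplices_def)

lemma simplices_card:
  assumes "\<sigma> \<in> simplices n"
  shows "finite \<sigma>" "1 \<le> card \<sigma>" "card \<sigma> \<le> n"
proof -
  have \<sigma>: "\<sigma> \<subseteq> {0..<n}" "\<sigma> \<noteq> {}" using assms by (auto simp: simplices_def)
  then show "finite \<sigma>" using finite_subset by blast
  with \<sigma> show "1 \<le> card \<sigma>" by (simp add: Suc_le_eq card_gt_0_iff)
  show "card \<sigma> \<le> n" using card_mono[OF _ \<sigma>(1)] by simp
qed

lemma subcomplexesI:
  assumes "\<And>\<sigma>. \<sigma> \<in> Y \<Longrightarrow> \<sigma> \<in> simplices n"
    and "\<And>\<sigma> \<tau>. \<sigma> \<in> Y \<Longrightarrow> \<tau> \<subseteq> \<sigma> \<Longrightarrow> \<tau> \<noteq> {} \<Longrightarrow> \<tau> \<in> Y"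
  shows "Y \<in> subcomplexes n"
  using assms unfolding subcomplexes_def simplices_def by blast

lemma subcomplexes_simplices: "Y \<in> subcomplexes n \<Longrightarrow> Y \<subseteq> simplices n"
  unfolding subcomplexes_def simplices_def by blast

lemma subcomplexes_downward_closed:
  "Y \<in> subcomplexes n \<Longrightarrow> \<sigma> \<in> Y \<Longrightarrow> \<tau> \<subseteq> \<sigma> \<Longrightarrow> \<tau> \<noteq> {} \<Longrightarrow> \<tau> \<in> Y"
  unfolding subcomplexes_def by blast

lemma finite_subcomplex: "Y \<in> subcomplexes n \<Longrightarrow> finite Y"
  using finite_subset[OF subcomplexes_simplices finite_simplices] .

lemma subcomplexes_Un:
  assumes "A \<in> subcomplexes n" "B \<in> subcomplexes n"
  shows "A \<union> B \<in> subcomplexes n"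
proof (rule subcomplexesI)
  show "\<sigma> \<in> simplices n" if "\<sigma> \<in> A \<union> B" for \<sigma>
    using that assms subcomplexes_simplices by blast
  show "\<tau> \<in> A \<union> B" if "\<sigma> \<in> A \<union> B" "\<tau> \<subseteq> \<sigma>" "\<tau> \<noteq> {}" for \<sigma> \<tau>
    using that assms subcomplexes_downward_closed by blast
qed

lemma subcomplexes_Int:
  assumes "A \<in> subcomplexes n" "B \<in> subcomplexes n"
  shows "A \<inter> B \<in> subcomplexes n"
proof (rule subcomplexesI)
  show "\<sigma> \<in> simplices n" if "\<sigma> \<in> A \<inter> B" for \<sigma>
    using that assms subcomplexes_simplices by blast
  show "\<tau> \<in> A \<inter> B" if "\<sigma> \<in> A \<inter> B" "\<tau> \<subseteq> \<sigma>" "\<tau> \<noteq> {}" for \<sigma> \<tau>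
    using that assms subcomplexes_downward_closed by blast
qed

lemma min_nonfaces_subset: "min_nonfaces n Y \<subseteq> simplices n - Y"
  by (auto simp: min_nonfaces_def)

lemma finite_min_nonfaces: "finite (min_nonfaces n Y)"
  using finite_subset[OF _ finite_simplices] min_nonfaces_subset by blast

lemma subcomplexes_insert_min_nonface:
  assumes Y: "Y \<in> subcomplexes n" and \<sigma>: "\<sigma> \<in> min_nonfaces n Y"
  shows "insert \<sigma> Y \<in> subcomplexes n"
proof (rule subcomplexesI)
  fix \<rho> assume "\<rho> \<in> insert \<sigma> Y"
  then show "\<rho> \<in> simplices n"
    using subcomplexes_simplices[OF Y] min_nonfaces_subset \<sigma> by blast
next
  fix \<rho> \<tau> assume \<rho>: "\<rho> \<in> insert \<sigma> Y" and "\<tau> \<subseteq> \<rho>" "\<tau> \<noteq> {}"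
  show "\<tau> \<in> insert \<sigma> Y"
  proof (cases "\<rho> = \<sigma>")
    case True
    then show ?thesis
      using \<sigma> \<open>\<tau> \<subseteq> \<rho>\<close> \<open>\<tau> \<noteq> {}\<close> by (auto simp: min_nonfaces_def)
  next
    case False
    then show ?thesis
      using \<rho> subcomplexes_downward_closed[OF Y] \<open>\<tau> \<subseteq> \<rho>\<close> \<open>\<tau> \<noteq> {}\<close> by blast
  qed
qed

lemma min_nonfaces_insert:
  "F \<subseteq> min_nonfaces n Y \<Longrightarrow> \<sigma> \<notin> F \<Longrightarrow> F \<subseteq> min_nonfaces n (insert \<sigma> Y)"
  by (auto simp: min_nonfaces_def)

text \<open>Any face of \<open>Z - Y\<close> of minimal cardinality is a minimal non-face of \<open>Y\<close>.\<close>
lemma subcomplex_eq_if_disjoint_min_nonfaces: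
  assumes Z: "Z \<in> subcomplexes n" and "Y \<subseteq> Z" and disj: "Z \<inter> min_nonfaces n Y = {}"
  shows "Z = Y"
proof (rule ccontr)
  assume "Z \<noteq> Y"
  then obtain \<sigma>0 where "\<sigma>0 \<in> Z - Y" using \<open>Y \<subseteq> Z\<close> by blast
  then obtain \<sigma> where \<sigma>: "\<sigma> \<in> Z - Y" and least: "\<And>\<tau>. \<tau> \<in> Z - Y \<Longrightarrow> card \<sigma> \<le> card \<tau>"
    using ex_has_least_nat[of "\<lambda>\<tau>. \<tau> \<in> Z - Y" \<sigma>0 card] by blast
  have "finite \<sigma>" using \<sigma> subcomplexes_simplices[OF Z] simplices_card by blast
  have "\<tau> \<in> Y" if "\<tau> \<subset> \<sigma>" "\<tau> \<noteq> {}" for \<tau>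
  proof -
    have "\<tau> \<in> Z" using \<sigma> that subcomplexes_downward_closed[OF Z] by blast
    moreover have "card \<tau> < card \<sigma>" using psubset_card_mono[OF \<open>finite \<sigma>\<close> \<open>\<tau> \<subset> \<sigma>\<close>] .
    ultimately show ?thesis using least by fastforce
  qed
  then have "\<sigma> \<in> min_nonfaces n Y"
    using \<sigma> subcomplexes_simplices[OF Z] by (auto simp: min_nonfaces_def)
  then show False using \<sigma> disj by blast
qed

lemma incl_avoid_prob_split:
  "incl_avoid_prob X Y F = incl_avoid_prob X (insert \<sigma> Y) F + incl_avoid_prob X Y (insert \<sigma> F)"
proof -
  have "{Z. Y \<subseteq> Z \<and> Z \<inter> F = {}} =
      {Z. insert \<sigma> Y \<subseteq> Z \<and> Z \<inter> F = {}} \<union> {Z. Y \<subseteq> Z \<and> Z \<inter> insert \<sigma> F = {}}"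
    by auto
  moreover have "{Z. insert \<sigma> Y \<subseteq> Z \<and> Z \<inter> F = {}} \<inter> {Z. Y \<subseteq> Z \<and> Z \<inter> insert \<sigma> F = {}} = {}"
    by auto
  ultimately show ?thesis
    by (simp add: measure_pmf.finite_measure_Union)
qed

lemma incl_avoid_min_nonfaces_eq_pmf:
  assumes supp: "set_pmf X \<subseteq> subcomplexes n" and Y: "Y \<in> subcomplexes n"
  shows "incl_avoid_prob X Y (min_nonfaces n Y) = pmf X Y"
proof -
  have "{Z. Y \<subseteq> Z \<and> Z \<inter> min_nonfaces n Y = {}} \<inter> set_pmf X = {Y} \<inter> set_pmf X"
    using subcomplex_eq_if_disjoint_min_nonfaces supp min_nonfaces_subset by blast
  then show ?thesis
    by (metis measure_Int_set_pmf measure_pmf_single)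
qed

text \<open>Downward induction from \<open>F = min_nonfaces n Y\<close>, the case of \<open>pmf X Y\<close>: a minimal non-face
  \<open>\<sigma> \<notin> F\<close> is either added to \<open>Y\<close> or to \<open>F\<close>.\<close>
lemma incl_avoid_prob_if_pmf_prod:
  assumes supp: "set_pmf X \<subseteq> subcomplexes n"
    and pmf_X: "\<And>Y. Y \<in> subcomplexes n \<Longrightarrow> pmf X Y = (\<Prod>\<sigma>\<in>Y. q \<sigma>) * (\<Prod>\<sigma>\<in>min_nonfaces n Y. 1 - q \<sigma>)"
    and "Y \<in> subcomplexes n" "F \<subseteq> min_nonfaces n Y"
  shows "incl_avoid_prob X Y F = (\<Prod>\<sigma>\<in>Y. q \<sigma>) * (\<Prod>\<sigma>\<in>F. 1 - q \<sigma>)"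
  using assms(3,4)
proof (induction "card (simplices n - Y) + card (simplices n - Y - F)" arbitrary: Y F rule: less_induct)
  case (less Y F)
  show ?case
  proof (cases "F = min_nonfaces n Y")
    case True
    then show ?thesis using incl_avoid_min_nonfaces_eq_pmf[OF supp] pmf_X less.prems(1) by simp
  next
    case False
    then obtain \<sigma> where \<sigma>: "\<sigma> \<in> min_nonfaces n Y" "\<sigma> \<notin> F" using less.prems(2) by auto
    have "\<sigma> \<in> simplices n - Y" using \<sigma> min_nonfaces_subset by blast
    then have shrink: "simplices n - insert \<sigma> Y \<subset> simplices n - Y"
      "simplices n - insert \<sigma> Y - F \<subset> simplices n - Y - F"
      "simplices n - Y - insert \<sigma> F \<subset> simplices n - Y - F"
      using \<sigma>(2) by blast+
    have fin: "finite (simplices n - Y - F)" "finite (simplices n - Y)"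
      using finite_simplices by simp_all
    have "incl_avoid_prob X (insert \<sigma> Y) F = (\<Prod>\<sigma>\<in>insert \<sigma> Y. q \<sigma>) * (\<Prod>\<sigma>\<in>F. 1 - q \<sigma>)"
    proof (rule less.hyps)
      show "card (simplices n - insert \<sigma> Y) + card (simplices n - insert \<sigma> Y - F)
          < card (simplices n - Y) + card (simplices n - Y - F)"
        using psubset_card_mono[OF fin(2) shrink(1)] psubset_card_mono[OF fin(1) shrink(2)] by linarith
    qed (use subcomplexes_insert_min_nonface[OF less.prems(1) \<sigma>(1)]
           min_nonfaces_insert[OF less.prems(2) \<sigma>(2)] in auto)
    moreover have "incl_avoid_prob X Y (insert \<sigma> F) = (\<Prod>\<sigma>\<in>Y. q \<sigma>) * (\<Prod>\<sigma>\<in>insert \<sigma> F. 1 - q \<sigma>)"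
    proof (rule less.hyps)
      show "card (simplices n - Y) + card (simplices n - Y - insert \<sigma> F)
          < card (simplices n - Y) + card (simplices n - Y - F)"
        using psubset_card_mono[OF fin(1) shrink(3)] by linarith
    qed (use less.prems \<sigma> in auto)
    moreover have "finite Y" "finite F"
      using finite_subcomplex[OF less.prems(1)] finite_subset[OF less.prems(2) finite_min_nonfaces] .
    ultimately show ?thesis
      using incl_avoid_prob_split[of X Y F \<sigma>] \<sigma> \<open>\<sigma> \<in> simplices n - Y\<close> by (simp add: algebra_simps)
  qed
qed

lemma incl_avoid_prob_if_incl_prob_prod:
  assumes incl: "\<And>Y. Y \<in> subcomplexes n \<Longrightarrow> incl_prob X Y = (\<Prod>\<sigma>\<in>Y. q \<sigma>)"
    and Y: "Y \<in> subcomplexes n" and F: "F \<subseteq> min_nonfaces n Y"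
  shows "incl_avoid_prob X Y F = (\<Prod>\<sigma>\<in>Y. q \<sigma>) * (\<Prod>\<sigma>\<in>F. 1 - q \<sigma>)"
proof -
  have "finite F" using finite_subset[OF F finite_min_nonfaces] .
  then show ?thesis using Y F
  proof (induction F arbitrary: Y rule: finite_induct)
    case empty
    then show ?case using incl by simp
  next
    case (insert \<sigma> F)
    have \<sigma>: "\<sigma> \<in> min_nonfaces n Y" "\<sigma> \<notin> Y"
      using insert.prems(2) min_nonfaces_subset by blast+
    have "incl_avoid_prob X (insert \<sigma> Y) F = (\<Prod>\<sigma>\<in>insert \<sigma> Y. q \<sigma>) * (\<Prod>\<sigma>\<in>F. 1 - q \<sigma>)"
      using insert.prems(2) insert.IH[OF subcomplexes_insert_min_nonface[OF insert.prems(1) \<sigma>(1)]]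
        min_nonfaces_insert[of F n Y \<sigma>] insert.hyps(2) by blast
    moreover have "incl_avoid_prob X Y F = (\<Prod>\<sigma>\<in>Y. q \<sigma>) * (\<Prod>\<sigma>\<in>F. 1 - q \<sigma>)"
      using insert by auto
    ultimately show ?case
      using incl_avoid_prob_split[of X Y F \<sigma>] finite_subcomplex[OF insert.prems(1)] \<sigma> insert.hyps
      by (simp add: algebra_simps)
  qed
qed

lemma incl_prob_prod_iff_pmf_prod:
  assumes supp: "set_pmf X \<subseteq> subcomplexes n"
  shows "(\<forall>Y\<in>subcomplexes n. incl_prob X Y = (\<Prod>\<sigma>\<in>Y. q \<sigma>)) \<longleftrightarrow>
    (\<forall>Y\<in>subcomplexes n. pmf X Y = (\<Prod>\<sigma>\<in>Y. q \<sigma>) * (\<Prod>\<sigma>\<in>min_nonfaces n Y. 1 - q \<sigma>))"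
proof (intro iffI ballI)
  fix Y assume "\<forall>Y\<in>subcomplexes n. incl_prob X Y = (\<Prod>\<sigma>\<in>Y. q \<sigma>)" "Y \<in> subcomplexes n"
  then show "pmf X Y = (\<Prod>\<sigma>\<in>Y. q \<sigma>) * (\<Prod>\<sigma>\<in>min_nonfaces n Y. 1 - q \<sigma>)"
    using incl_avoid_prob_if_incl_prob_prod[of n X q Y "min_nonfaces n Y"]
      incl_avoid_min_nonfaces_eq_pmf[OF supp] by simp
next
  fix Y assume "\<forall>Y\<in>subcomplexes n. pmf X Y = (\<Prod>\<sigma>\<in>Y. q \<sigma>) * (\<Prod>\<sigma>\<in>min_nonfaces n Y. 1 - q \<sigma>)"
    "Y \<in> subcomplexes n"
  then show "incl_prob X Y = (\<Prod>\<sigma>\<in>Y. q \<sigma>)"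
    using incl_avoid_prob_if_pmf_prod[OF supp, of q Y "{}"] by simp
qed

lemma prod_group_by_card:
  assumes fin: "finite A" and card_A: "\<forall>\<sigma>\<in>A. 1 \<le> card \<sigma> \<and> card \<sigma> \<le> n"
  shows "(\<Prod>\<sigma>\<in>A. h (card \<sigma> - 1)) = (\<Prod>i<n. h i ^ card {\<sigma>\<in>A. card \<sigma> = i + 1})"
proof -
  have "(\<lambda>\<sigma>. card \<sigma> - 1) ` A \<subseteq> {..<n}" using card_A by force
  then have "(\<Prod>\<sigma>\<in>A. h (card \<sigma> - 1))
      = (\<Prod>i<n. \<Prod>\<sigma>\<in>{\<sigma>. \<sigma> \<in> A \<and> card \<sigma> - 1 = i}. h (card \<sigma> - 1))"
    using prod.group[OF fin finite_lessThan, where g = "\<lambda>\<sigma>. card \<sigma> - 1" and h = "\<lambda>\<sigma>. h (card \<sigma> - 1)"] by simp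
  also have "\<dots> = (\<Prod>i<n. \<Prod>\<sigma>\<in>{\<sigma>\<in>A. card \<sigma> = i + 1}. h i)"
  proof (rule prod.cong[OF refl])
    fix i
    have "{\<sigma>. \<sigma> \<in> A \<and> card \<sigma> - 1 = i} = {\<sigma>\<in>A. card \<sigma> = i + 1}" using card_A by force
    then show "(\<Prod>\<sigma>\<in>{\<sigma>. \<sigma> \<in> A \<and> card \<sigma> - 1 = i}. h (card \<sigma> - 1))
        = (\<Prod>\<sigma>\<in>{\<sigma>\<in>A. card \<sigma> = i + 1}. h i)"
      by (auto intro: prod.cong)
  qed
  finally show ?thesis by simp
qed

lemma mp_prob_eq_prod:
  assumes Y: "Y \<in> subcomplexes n"
  shows "mp_prob n p Y
    = (\<Prod>\<sigma>\<in>Y. p (card \<sigma> - 1)) * (\<Prod>\<sigma>\<in>min_nonfaces n Y. 1 - p (card \<sigma> - 1))"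
proof -
  have card_simplices: "\<forall>\<sigma>\<in>A. 1 \<le> card \<sigma> \<and> card \<sigma> \<le> n" if "A \<subseteq> simplices n" for A
    using that simplices_card by blast
  have e: "e_num n Y i = card {\<sigma>\<in>min_nonfaces n Y. card \<sigma> = i + 1}" for i
  proof -
    have "{\<sigma>. \<sigma> \<subseteq> {0..<n} \<and> card \<sigma> = i + 1 \<and> \<sigma> \<notin> Y \<and> (\<forall>\<tau>. \<tau> \<subset> \<sigma> \<and> \<tau> \<noteq> {} \<longrightarrow> \<tau> \<in> Y)}
        = {\<sigma>\<in>min_nonfaces n Y. card \<sigma> = i + 1}"
      unfolding min_nonfaces_def simplices_def by (auto simp del: atLeastLessThan_iff)
    then show ?thesis unfolding e_num_def by simp
  qed
  have f: "(\<Prod>\<sigma>\<in>Y. p (card \<sigma> - 1)) = (\<Prod>i<n. p i ^ f_num Y i)"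
    unfolding f_num_def
    using prod_group_by_card[OF finite_subcomplex[OF Y] card_simplices[OF subcomplexes_simplices[OF Y]]] .
  have "(\<Prod>\<sigma>\<in>min_nonfaces n Y. 1 - p (card \<sigma> - 1)) = (\<Prod>i<n. (1 - p i) ^ e_num n Y i)"
    unfolding e using prod_group_by_card[OF finite_min_nonfaces card_simplices[OF subset_trans[OF
        min_nonfaces_subset Diff_subset]], where h = "\<lambda>i. 1 - p i"] .
  with f show ?thesis
    unfolding mp_prob_def prod.distrib by simp
qed

lemma is_multiparam_iff_incl_prob:
  assumes "random_subcomplex n X"
  shows "is_multiparam n p X \<longleftrightarrow>
    (\<forall>Y\<in>subcomplexes n. incl_prob X Y = (\<Prod>\<sigma>\<in>Y. p (card \<sigma> - 1)))"
  using assms incl_prob_prod_iff_pmf_prod[of X n "\<lambda>\<sigma>. p (card \<sigma> - 1)"] mp_prob_eq_prod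
  unfolding is_multiparam_def random_subcomplex_def by simp

lemma is_multiparam_unique:
  assumes "is_multiparam n p X" "is_multiparam n p X'"
  shows "X = X'"
proof (rule pmf_eqI)
  fix Y
  show "pmf X Y = pmf X' Y"
  proof (cases "Y \<in> subcomplexes n")
    case False
    then have "Y \<notin> set_pmf X" "Y \<notin> set_pmf X'"
      using assms unfolding is_multiparam_def random_subcomplex_def by blast+
    then show ?thesis by (simp add: set_pmf_eq)
  qed (use assms in \<open>simp add: is_multiparam_def\<close>)
qed

lemma spatially_independent_if_incl_prob_prod:
  assumes incl: "\<forall>Y\<in>subcomplexes n. incl_prob X Y = (\<Prod>\<sigma>\<in>Y. q \<sigma>)"
  shows "spatially_independent n X"
  unfolding spatially_independent_def
proof (intro ballI)
  fix Y1 Y2 assume Y: "Y1 \<in> subcomplexes n" "Y2 \<in> subcomplexes n"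
  have "incl_prob X (Y1 \<union> Y2) = prod q (Y1 \<union> Y2)" "incl_prob X (Y1 \<inter> Y2) = prod q (Y1 \<inter> Y2)"
    "incl_prob X Y1 = prod q Y1" "incl_prob X Y2 = prod q Y2"
    using incl Y subcomplexes_Un[OF Y] subcomplexes_Int[OF Y] by blast+
  then show "incl_prob X (Y1 \<union> Y2) * incl_prob X (Y1 \<inter> Y2) = incl_prob X Y1 * incl_prob X Y2"
    using prod.union_inter[OF finite_subcomplex[OF Y(1)] finite_subcomplex[OF Y(2)]] by simp
qed

definition relabel :: "('a \<Rightarrow> 'b) \<Rightarrow> 'a set set \<Rightarrow> 'b set set" where
  "relabel g Y = (\<lambda>\<sigma>. g ` \<sigma>) ` Y"

lemma relabel_subset_iff: "inj g \<Longrightarrow> relabel g A \<subseteq> relabel g B \<longleftrightarrow> A \<subseteq> B"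
  unfolding relabel_def by (rule inj_image_subset_iff) (simp add: inj_def inj_image_eq_iff)

lemma relabel_relabel_inv: "bij g \<Longrightarrow> relabel g (relabel (inv g) Y) = Y"
  unfolding relabel_def by (simp add: image_image image_inv_f_f bij_is_surj surj_f_inv_f)

lemma prod_card_relabel:
  assumes "inj g"
  shows "(\<Prod>\<sigma>\<in>relabel g Y. h (card \<sigma>)) = (\<Prod>\<sigma>\<in>Y. h (card \<sigma>))"
proof -
  have "inj_on (\<lambda>\<sigma>. g ` \<sigma>) Y" using assms by (simp add: inj_on_def inj_image_eq_iff)
  then show ?thesis
    unfolding relabel_def using assms by (simp add: prod.reindex card_image inj_on_subset)
qed

lemma subcomplexes_relabel:
  assumes g: "g permutes {0..<n}" and Y: "Y \<in> subcomplexes n"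
  shows "relabel g Y \<in> subcomplexes n"
proof (rule subcomplexesI)
  fix \<rho> assume "\<rho> \<in> relabel g Y"
  then show "\<rho> \<in> simplices n"
    using subcomplexes_simplices[OF Y] permutes_image[OF g] unfolding relabel_def simplices_def by blast
next
  fix \<rho> \<tau> assume "\<rho> \<in> relabel g Y" "\<tau> \<subseteq> \<rho>" "\<tau> \<noteq> {}"
  then obtain \<sigma> where \<sigma>: "\<sigma> \<in> Y" "\<tau> \<subseteq> g ` \<sigma>" "\<tau> \<noteq> {}" unfolding relabel_def by blast
  have "\<tau> = g ` (inv g ` \<tau>)"
    using permutes_inverses(1)[OF g] by (simp add: image_image)
  moreover have "inv g ` \<tau> \<subseteq> \<sigma>"
    using \<sigma>(2) permutes_inverses(2)[OF g] by auto
  then have "inv g ` \<tau> \<in> Y"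
    using \<sigma> subcomplexes_downward_closed[OF Y] by blast
  ultimately show "\<tau> \<in> relabel g Y" unfolding relabel_def by blast
qed

lemma incl_prob_map_relabel:
  "inj g \<Longrightarrow> incl_prob (map_pmf (relabel g) X) (relabel g A) = incl_prob X A"
  by (simp add: vimage_def relabel_subset_iff)

lemma homogeneous_incl_prob_relabel:
  assumes "homogeneous n X" "g permutes {0..<n}"
  shows "incl_prob X (relabel g A) = incl_prob X A"
proof -
  have "map_pmf (relabel g) X = X"
    using assms unfolding homogeneous_def relabel_def[abs_def] by blast
  then show ?thesis
    using incl_prob_map_relabel[OF permutes_inj[OF assms(2)], of X A] by simp
qed

lemma homogeneous_if_is_multiparam:
  assumes X: "is_multiparam n p X"
  shows "homogeneous n X"
  unfolding homogeneous_def
proof (intro allI impI)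
  fix g assume g: "g permutes {0..<n}"
  have ginv: "inv g permutes {0..<n}" using permutes_inv[OF g] .
  have X_rand: "random_subcomplex n X" using X unfolding is_multiparam_def by blast
  then have rand: "random_subcomplex n (map_pmf (relabel g) X)"
    using subcomplexes_relabel[OF g] unfolding random_subcomplex_def by auto
  have "incl_prob (map_pmf (relabel g) X) Y = (\<Prod>\<sigma>\<in>Y. p (card \<sigma> - 1))"
    if Y: "Y \<in> subcomplexes n" for Y
  proof -
    have "incl_prob (map_pmf (relabel g) X) Y = incl_prob X (relabel (inv g) Y)"
      using incl_prob_map_relabel[OF permutes_inj[OF g], of X "relabel (inv g) Y"]
        relabel_relabel_inv[OF permutes_bij[OF g]] by simp
    also have "\<dots> = (\<Prod>\<sigma>\<in>relabel (inv g) Y. p (card \<sigma> - 1))"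
      using X subcomplexes_relabel[OF ginv Y] is_multiparam_iff_incl_prob[OF X_rand] by blast
    also have "\<dots> = (\<Prod>\<sigma>\<in>Y. p (card \<sigma> - 1))"
      by (rule prod_card_relabel[OF permutes_inj[OF ginv]])
    finally show ?thesis .
  qed
  then have "is_multiparam n p (map_pmf (relabel g) X)"
    using is_multiparam_iff_incl_prob[OF rand] by blast
  then show "map_pmf (\<lambda>Y. (\<lambda>\<sigma>. g ` \<sigma>) ` Y) X = X"
    using is_multiparam_unique[OF X] unfolding relabel_def[abs_def] by metis
qed

definition simplex_complex :: "'a set \<Rightarrow> 'a set set" where
  "simplex_complex \<sigma> = {\<tau>. \<tau> \<subseteq> \<sigma> \<and> \<tau> \<noteq> {}}"

definition boundary_complex :: "'a set \<Rightarrow> 'a set set" where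
  "boundary_complex \<sigma> = {\<tau>. \<tau> \<subset> \<sigma> \<and> \<tau> \<noteq> {}}"

text \<open>The conditional probability that \<open>\<sigma> \<in> X\<close> given that its boundary lies in \<open>X\<close>
  (with the junk value \<open>0\<close> if the boundary has probability \<open>0\<close>).\<close>
definition face_ratio :: "'a set set pmf \<Rightarrow> 'a set \<Rightarrow> real" where
  "face_ratio X \<sigma> = incl_prob X (simplex_complex \<sigma>) / incl_prob X (boundary_complex \<sigma>)"

lemma subcomplexes_simplex_complex: "\<sigma> \<subseteq> {0..<n} \<Longrightarrow> simplex_complex \<sigma> \<in> subcomplexes n"
  unfolding subcomplexes_def simplex_complex_def by blast

lemma relabel_simplex_complex: "relabel g (simplex_complex \<sigma>) = simplex_complex (g ` \<sigma>)"
  unfolding relabel_def simplex_complex_def by (auto simp: subset_image_iff)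

lemma relabel_boundary_complex:
  "inj g \<Longrightarrow> relabel g (boundary_complex \<sigma>) = boundary_complex (g ` \<sigma>)"
  unfolding relabel_def boundary_complex_def
  by (auto simp: subset_image_iff inj_image_subset_iff psubset_eq inj_image_eq_iff)

lemma incl_prob_antimono: "A \<subseteq> B \<Longrightarrow> incl_prob X B \<le> incl_prob X A"
  by (rule measure_pmf.finite_measure_mono) auto

lemma face_ratio_bounds: "0 \<le> face_ratio X \<sigma> \<and> face_ratio X \<sigma> \<le> 1"
proof -
  have "boundary_complex \<sigma> \<subseteq> simplex_complex \<sigma>"
    unfolding boundary_complex_def simplex_complex_def by blast
  then have le: "incl_prob X (simplex_complex \<sigma>) \<le> incl_prob X (boundary_complex \<sigma>)"
    by (rule incl_prob_antimono)
  have nonneg: "0 \<le> incl_prob X (simplex_complex \<sigma>)" by (rule measure_nonneg)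
  show ?thesis
  proof (cases "incl_prob X (boundary_complex \<sigma>) = 0")
    case False
    with le nonneg have "0 < incl_prob X (boundary_complex \<sigma>)" by linarith
    with le nonneg show ?thesis unfolding face_ratio_def by (simp add: divide_le_eq_1)
  qed (simp add: face_ratio_def)
qed

lemma face_ratio_relabel:
  assumes "homogeneous n X" "g permutes {0..<n}"
  shows "face_ratio X (g ` \<sigma>) = face_ratio X \<sigma>"
  unfolding face_ratio_def
  using homogeneous_incl_prob_relabel[OF assms] relabel_simplex_complex
    relabel_boundary_complex[OF permutes_inj[OF assms(2)]] by metis

lemma remove_maximal_face:
  assumes Y: "Y \<in> subcomplexes n" and \<sigma>: "\<sigma> \<in> Y" and max: "\<And>\<tau>. \<tau> \<in> Y \<Longrightarrow> \<sigma> \<subseteq> \<tau> \<Longrightarrow> \<tau> = \<sigma>"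
  shows "Y - {\<sigma>} \<in> subcomplexes n"
    and "(Y - {\<sigma>}) \<union> simplex_complex \<sigma> = Y"
    and "(Y - {\<sigma>}) \<inter> simplex_complex \<sigma> = boundary_complex \<sigma>"
proof -
  have faces: "simplex_complex \<sigma> \<subseteq> Y"
    using subcomplexes_downward_closed[OF Y \<sigma>] unfolding simplex_complex_def by blast
  show "Y - {\<sigma>} \<in> subcomplexes n"
  proof (rule subcomplexesI)
    show "\<rho> \<in> simplices n" if "\<rho> \<in> Y - {\<sigma>}" for \<rho>
      using that subcomplexes_simplices[OF Y] by blast
    show "\<tau> \<in> Y - {\<sigma>}" if "\<rho> \<in> Y - {\<sigma>}" "\<tau> \<subseteq> \<rho>" "\<tau> \<noteq> {}" for \<rho> \<tau>
      using that subcomplexes_downward_closed[OF Y] max by blast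
  qed
  have "\<sigma> \<noteq> {}" using \<sigma> subcomplexes_simplices[OF Y] unfolding simplices_def by blast
  then show "(Y - {\<sigma>}) \<union> simplex_complex \<sigma> = Y"
    using faces \<sigma> unfolding simplex_complex_def by blast
  show "(Y - {\<sigma>}) \<inter> simplex_complex \<sigma> = boundary_complex \<sigma>"
    using faces unfolding simplex_complex_def boundary_complex_def by blast
qed

text \<open>Spatial independence for \<open>Y = (Y - {\<sigma>}) \<union> simplex_complex \<sigma>\<close>, with \<open>\<sigma>\<close> a maximal face,
  splits off the factor \<open>face_ratio X \<sigma>\<close>.\<close>
lemma incl_prob_eq_prod_face_ratio:
  assumes si: "spatially_independent n X" and "Y \<in> subcomplexes n"
  shows "incl_prob X Y = (\<Prod>\<sigma>\<in>Y. face_ratio X \<sigma>)"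
  using assms(2)
proof (induction "card Y" arbitrary: Y rule: less_induct)
  case (less Y)
  have fin: "finite Y" using finite_subcomplex[OF less.prems] .
  show ?case
  proof (cases "Y = {}")
    case True
    then have "{Z. Y \<subseteq> Z} = UNIV" by blast
    then show ?thesis using measure_pmf.prob_space[of X] by (simp only: True prod.empty space_measure_pmf)
  next
    case False
    then obtain \<sigma> where \<sigma>: "\<sigma> \<in> Y" and max: "\<And>\<tau>. \<tau> \<in> Y \<Longrightarrow> \<sigma> \<subseteq> \<tau> \<Longrightarrow> \<tau> = \<sigma>"
      using finite_has_maximal[OF fin] by blast
    note decomp = remove_maximal_face[OF less.prems \<sigma> max]
    have "\<sigma> \<subseteq> {0..<n}" using \<sigma> subcomplexes_simplices[OF less.prems] unfolding simplices_def by blast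
    then have split: "incl_prob X Y * incl_prob X (boundary_complex \<sigma>)
        = incl_prob X (Y - {\<sigma>}) * incl_prob X (simplex_complex \<sigma>)"
      using si decomp subcomplexes_simplex_complex unfolding spatially_independent_def by metis
    have IH: "incl_prob X (Y - {\<sigma>}) = (\<Prod>\<rho>\<in>Y - {\<sigma>}. face_ratio X \<rho>)"
      using less.hyps[OF card_Diff1_less[OF fin \<sigma>] decomp(1)] .
    have "incl_prob X Y = incl_prob X (Y - {\<sigma>}) * face_ratio X \<sigma>"
    proof (cases "incl_prob X (boundary_complex \<sigma>) = 0")
      case True
      have "boundary_complex \<sigma> \<subseteq> Y" using decomp(3) by blast
      then have "incl_prob X Y = 0"
        using incl_prob_antimono[of "boundary_complex \<sigma>" Y X] True
          measure_nonneg[of "measure_pmf X" "{Z. Y \<subseteq> Z}"] by linarith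
      then show ?thesis using True by (simp add: face_ratio_def)
    next
      case False
      then show ?thesis using split by (simp add: face_ratio_def field_simps)
    qed
    then show ?thesis using IH fin \<sigma> by (simp add: prod.remove mult.commute)
  qed
qed

lemma permutes_image_eq:
  assumes "finite S" "\<sigma> \<subseteq> S" "\<tau> \<subseteq> S" "card \<sigma> = card \<tau>"
  shows "\<exists>g. g permutes S \<and> g ` \<sigma> = \<tau>"
proof -
  have fin: "finite \<sigma>" "finite \<tau>" using assms(1-3) finite_subset by blast+
  obtain f where f: "bij_betw f \<sigma> \<tau>" using finite_same_card_bij[OF fin assms(4)] by blast
  have "card (S - \<sigma>) = card (S - \<tau>)"
    using card_Diff_subset[OF fin(1) assms(2)] card_Diff_subset[OF fin(2) assms(3)] assms(4) by simp
  then obtain h where h: "bij_betw h (S - \<sigma>) (S - \<tau>)"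
    using finite_same_card_bij[of "S - \<sigma>" "S - \<tau>"] assms(1) by blast
  define g where "g x = (if x \<in> \<sigma> then f x else if x \<in> S then h x else x)" for x
  have "bij_betw g \<sigma> \<tau>" using f by (rule bij_betw_cong[THEN iffD1, rotated]) (simp add: g_def)
  moreover have "bij_betw g (S - \<sigma>) (S - \<tau>)"
    using h by (rule bij_betw_cong[THEN iffD1, rotated]) (simp add: g_def)
  ultimately have "bij_betw g (\<sigma> \<union> (S - \<sigma>)) (\<tau> \<union> (S - \<tau>))"
    by (rule bij_betw_combine) blast
  then have "bij_betw g S S" using assms(2,3) by (simp add: Un_absorb1 Un_Diff_cancel)
  moreover have "g x = x" if "x \<notin> S" for x using that assms(2) by (auto simp: g_def)
  ultimately have "g permutes S" by (rule bij_imp_permutes)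
  moreover have "g ` \<sigma> = \<tau>" using bij_betw_imp_surj_on[OF \<open>bij_betw g \<sigma> \<tau>\<close>] .
  ultimately show ?thesis by blast
qed

lemma face_ratio_eq_initial_segment:
  assumes "homogeneous n X" "\<sigma> \<in> simplices n"
  shows "face_ratio X \<sigma> = face_ratio X {0..<card \<sigma>}"
proof -
  have "card \<sigma> \<le> n" "\<sigma> \<subseteq> {0..<n}" using assms(2) simplices_card unfolding simplices_def by blast+
  then obtain g where "g permutes {0..<n}" "g ` {0..<card \<sigma>} = \<sigma>"
    using permutes_image_eq[of "{0..<n}" "{0..<card \<sigma>}" \<sigma>] by auto
  then show ?thesis using face_ratio_relabel[OF assms(1)] by metis
qed

lemma is_multiparam_if_homogeneous_spatially_independent:
  assumes rand: "random_subcomplex n X" and hom: "homogeneous n X" and si: "spatially_independent n X"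
  defines "p \<equiv> \<lambda>i. face_ratio X {0..<Suc i}"
  shows "(\<forall>i<n. 0 \<le> p i \<and> p i \<le> 1) \<and> is_multiparam n p X"
proof
  show "\<forall>i<n. 0 \<le> p i \<and> p i \<le> 1" unfolding p_def using face_ratio_bounds by blast
  have "incl_prob X Y = (\<Prod>\<sigma>\<in>Y. p (card \<sigma> - 1))" if Y: "Y \<in> subcomplexes n" for Y
  proof -
    have "face_ratio X \<sigma> = p (card \<sigma> - 1)" if "\<sigma> \<in> Y" for \<sigma>
    proof -
      have "\<sigma> \<in> simplices n" using that subcomplexes_simplices[OF Y] by blast
      moreover from this have "Suc (card \<sigma> - 1) = card \<sigma>" using simplices_card(2) by fastforce
      ultimately show ?thesis using face_ratio_eq_initial_segment[OF hom] unfolding p_def by simp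
    qed
    then show ?thesis using incl_prob_eq_prod_face_ratio[OF si Y] by simp
  qed
  then show "is_multiparam n p X" using is_multiparam_iff_incl_prob[OF rand] by blast
qed

lemma spatially_independent_if_is_multiparam:
  assumes "is_multiparam n p X"
  shows "spatially_independent n X"
proof -
  have "random_subcomplex n X" using assms unfolding is_multiparam_def by blast
  then show ?thesis
    using assms is_multiparam_iff_incl_prob spatially_independent_if_incl_prob_prod by blast
qed

theorem theorem3p3:
  fixes n :: nat
  shows "(\<forall>(p :: nat \<Rightarrow> real) X. (\<forall>i<n. 0 \<le> p i \<and> p i \<le> 1) \<and> is_multiparam n p X
            \<longrightarrow> homogeneous n X \<and> spatially_independent n X)
       \<and> (\<forall>X. random_subcomplex n X \<and> homogeneous n X \<and> spatially_independent n X
            \<longrightarrow> (\<exists>p :: nat \<Rightarrow> real. (\<forall>i<n. 0 \<le> p i \<and> p i \<le> 1) \<and> is_multiparam n p X))"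
proof (rule conjI; intro allI impI)
  fix p X assume "(\<forall>i<n. 0 \<le> p i \<and> p i \<le> 1) \<and> is_multiparam n p X"
  then show "homogeneous n X \<and> spatially_independent n X"
    using homogeneous_if_is_multiparam spatially_independent_if_is_multiparam by blast
next
  fix X assume "random_subcomplex n X \<and> homogeneous n X \<and> spatially_independent n X"
  then show "\<exists>p. (\<forall>i<n. 0 \<le> p i \<and> p i \<le> 1) \<and> is_multiparam n p X"
    using is_multiparam_if_homogeneous_spatially_independent by meson
qed

end
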